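(* Let $C$ be endowed with the closed model defined by counting a family $(X_i)_{i\in I}$, let $Y$ be a cofibrant object and $Z$ any object, and let $f,g:Y\to Z$. Then $f$ and $g$ are right homotopic if and only if $f=g$.
   Context: $C$ has all small limits and colimits, initial object $\emptyset$; the closed model defined by counting $(X_i)_{i\in I}$ (a set-indexed family, with the maps $\emptyset\to X_i$ and the folding maps $X_i+X_i\to X_i$ permitting the small object argument) has as weak equivalences the morphisms $f:X\to X'$ such that $h\mapsto f\circ h$ is bijective $\mathrm{Hom}_C(X_i,X)\to\mathrm{Hom}_C(X_i,X')$ for every $i$, as fibrations all morphisms, and as cofibrations the morphisms with the left lifting property with respect to all weak equivalences. $Y$ is cofibrant if $\emptyset\to Y$ is a cofibration. A path object for $Z$ is an object $Z^I$ with a weak equivalence $i_Z:Z\to Z^I$ and a morphism $p_Z:Z^I\to Z\times Z$ with $p_Z\circ i_Z=(\mathrm{id}_Z,\mathrm{id}_Z)$. Two morphisms $f,g:Y\to Z$ are right homotopic if there is a path object $Z^I$ and a morphism $H:Y\to Z^I$ with $p_Z\circ H=(f,g)$. *)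

theory Defs
  imports Main
begin

record ('o, 'a) cat =
  Ob   :: "'o set"
  Arr  :: "'a set"
  Dom  :: "'a \<Rightarrow> 'o"
  Cod  :: "'a \<Rightarrow> 'o"
  Idt  :: "'o \<Rightarrow> 'a"
  Comp :: "'a \<Rightarrow> 'a \<Rightarrow> 'a"   (* Comp C g f = g \<circ> f *)

definition Hom :: "('o, 'a, 'm) cat_scheme \<Rightarrow> 'o \<Rightarrow> 'o \<Rightarrow> 'a set" where
  "Hom C X Y = {f \<in> Arr C. Dom C f = X \<and> Cod C f = Y}"

definition category :: "('o, 'a, 'm) cat_scheme \<Rightarrow> bool" where
  "category C \<longleftrightarrow>
     (\<forall>f \<in> Arr C. Dom C f \<in> Ob C \<and> Cod C f \<in> Ob C) \<and>
     (\<forall>X \<in> Ob C. Idt C X \<in> Hom C X X) \<and>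
     (\<forall>f \<in> Arr C. \<forall>g \<in> Arr C. Cod C f = Dom C g \<longrightarrow>
        Comp C g f \<in> Hom C (Dom C f) (Cod C g)) \<and>
     (\<forall>f \<in> Arr C. Comp C (Idt C (Cod C f)) f = f \<and> Comp C f (Idt C (Dom C f)) = f) \<and>
     (\<forall>f \<in> Arr C. \<forall>g \<in> Arr C. \<forall>h \<in> Arr C. Cod C f = Dom C g \<longrightarrow> Cod C g = Dom C h \<longrightarrow>
        Comp C h (Comp C g f) = Comp C (Comp C h g) f)"

definition diagram ::
  "('j, 'k, 'n) cat_scheme \<Rightarrow> ('o, 'a, 'm) cat_scheme \<Rightarrow> ('j \<Rightarrow> 'o) \<Rightarrow> ('k \<Rightarrow> 'a) \<Rightarrow> bool" where
  "diagram J C Fo Fa \<longleftrightarrow>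
     (\<forall>j \<in> Ob J. Fo j \<in> Ob C) \<and>
     (\<forall>u \<in> Arr J. Fa u \<in> Hom C (Fo (Dom J u)) (Fo (Cod J u))) \<and>
     (\<forall>j \<in> Ob J. Fa (Idt J j) = Idt C (Fo j)) \<and>
     (\<forall>u \<in> Arr J. \<forall>v \<in> Arr J. Cod J u = Dom J v \<longrightarrow> Fa (Comp J v u) = Comp C (Fa v) (Fa u))"

definition cone ::
  "('j, 'k, 'n) cat_scheme \<Rightarrow> ('o, 'a, 'm) cat_scheme \<Rightarrow> ('j \<Rightarrow> 'o) \<Rightarrow> ('k \<Rightarrow> 'a)
    \<Rightarrow> 'o \<Rightarrow> ('j \<Rightarrow> 'a) \<Rightarrow> bool" where
  "cone J C Fo Fa L lam \<longleftrightarrow> L \<in> Ob C \<and>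
     (\<forall>j \<in> Ob J. lam j \<in> Hom C L (Fo j)) \<and>
     (\<forall>u \<in> Arr J. Comp C (Fa u) (lam (Dom J u)) = lam (Cod J u))"

definition cocone ::
  "('j, 'k, 'n) cat_scheme \<Rightarrow> ('o, 'a, 'm) cat_scheme \<Rightarrow> ('j \<Rightarrow> 'o) \<Rightarrow> ('k \<Rightarrow> 'a)
    \<Rightarrow> 'o \<Rightarrow> ('j \<Rightarrow> 'a) \<Rightarrow> bool" where
  "cocone J C Fo Fa L lam \<longleftrightarrow> L \<in> Ob C \<and>
     (\<forall>j \<in> Ob J. lam j \<in> Hom C (Fo j) L) \<and>
     (\<forall>u \<in> Arr J. Comp C (lam (Cod J u)) (Fa u) = lam (Dom J u))"

definition has_limit ::
  "('j, 'k, 'n) cat_scheme \<Rightarrow> ('o, 'a, 'm) cat_scheme \<Rightarrow> ('j \<Rightarrow> 'o) \<Rightarrow> ('k \<Rightarrow> 'a) \<Rightarrow> bool" where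
  "has_limit J C Fo Fa \<longleftrightarrow> (\<exists>L lam. cone J C Fo Fa L lam \<and>
     (\<forall>L' mu. cone J C Fo Fa L' mu \<longrightarrow>
        (\<exists>!m. m \<in> Hom C L' L \<and> (\<forall>j \<in> Ob J. Comp C (lam j) m = mu j))))"

definition has_colimit ::
  "('j, 'k, 'n) cat_scheme \<Rightarrow> ('o, 'a, 'm) cat_scheme \<Rightarrow> ('j \<Rightarrow> 'o) \<Rightarrow> ('k \<Rightarrow> 'a) \<Rightarrow> bool" where
  "has_colimit J C Fo Fa \<longleftrightarrow> (\<exists>L lam. cocone J C Fo Fa L lam \<and>
     (\<forall>L' mu. cocone J C Fo Fa L' mu \<longrightarrow>
        (\<exists>!m. m \<in> Hom C L L' \<and> (\<forall>j \<in> Ob J. Comp C m (lam j) = mu j))))"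

text \<open>Small (co)completeness: (co)limits of all diagrams whose shape is a (small) category
  with objects of type 'j and arrows of type 'k (every HOL set is a set, i.e. small).\<close>
definition has_small_limits_colimits ::
  "('j, 'k) cat itself \<Rightarrow> ('o, 'a, 'm) cat_scheme \<Rightarrow> bool" where
  "has_small_limits_colimits _ C \<longleftrightarrow>
     (\<forall>(J :: ('j, 'k) cat) Fo Fa. category J \<and> diagram J C Fo Fa \<longrightarrow>
        has_limit J C Fo Fa \<and> has_colimit J C Fo Fa)"

definition is_initial :: "('o, 'a, 'm) cat_scheme \<Rightarrow> 'o \<Rightarrow> bool" where
  "is_initial C e \<longleftrightarrow> e \<in> Ob C \<and> (\<forall>Y \<in> Ob C. \<exists>!a. a \<in> Hom C e Y)"

definition is_product ::
  "('o, 'a, 'm) cat_scheme \<Rightarrow> 'o \<Rightarrow> 'o \<Rightarrow> 'o \<Rightarrow> 'a \<Rightarrow> 'a \<Rightarrow> bool" where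
  "is_product C A B P p1 p2 \<longleftrightarrow> P \<in> Ob C \<and> p1 \<in> Hom C P A \<and> p2 \<in> Hom C P B \<and>
     (\<forall>W \<in> Ob C. \<forall>u \<in> Hom C W A. \<forall>v \<in> Hom C W B.
        \<exists>!h. h \<in> Hom C W P \<and> Comp C p1 h = u \<and> Comp C p2 h = v)"

definition has_binary_products :: "('o, 'a, 'm) cat_scheme \<Rightarrow> bool" where
  "has_binary_products C \<longleftrightarrow>
     (\<forall>A \<in> Ob C. \<forall>B \<in> Ob C. \<exists>P p1 p2. is_product C A B P p1 p2)"

definition counting_weq ::
  "('o, 'a, 'm) cat_scheme \<Rightarrow> 'i set \<Rightarrow> ('i \<Rightarrow> 'o) \<Rightarrow> 'a \<Rightarrow> bool" where
  "counting_weq C I X f \<longleftrightarrow> f \<in> Arr C \<and>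
     (\<forall>i \<in> I. bij_betw (\<lambda>h. Comp C f h) (Hom C (X i) (Dom C f)) (Hom C (X i) (Cod C f)))"

definition counting_fib ::
  "('o, 'a, 'm) cat_scheme \<Rightarrow> 'i set \<Rightarrow> ('i \<Rightarrow> 'o) \<Rightarrow> 'a \<Rightarrow> bool" where
  "counting_fib C I X f \<longleftrightarrow> f \<in> Arr C"

definition llp :: "('o, 'a, 'm) cat_scheme \<Rightarrow> 'a \<Rightarrow> 'a \<Rightarrow> bool" where
  "llp C c w \<longleftrightarrow>
     (\<forall>u \<in> Hom C (Dom C c) (Dom C w). \<forall>v \<in> Hom C (Cod C c) (Cod C w).
        Comp C w u = Comp C v c \<longrightarrow>
        (\<exists>l \<in> Hom C (Cod C c) (Dom C w). Comp C l c = u \<and> Comp C w l = v))"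

definition counting_cof ::
  "('o, 'a, 'm) cat_scheme \<Rightarrow> 'i set \<Rightarrow> ('i \<Rightarrow> 'o) \<Rightarrow> 'a \<Rightarrow> bool" where
  "counting_cof C I X c \<longleftrightarrow> c \<in> Arr C \<and> (\<forall>w. counting_weq C I X w \<longrightarrow> llp C c w)"

definition cofibrant ::
  "('o, 'a, 'm) cat_scheme \<Rightarrow> 'i set \<Rightarrow> ('i \<Rightarrow> 'o) \<Rightarrow> 'o \<Rightarrow> 'o \<Rightarrow> bool" where
  "cofibrant C I X e Y \<longleftrightarrow> Y \<in> Ob C \<and> counting_cof C I X (THE a. a \<in> Hom C e Y)"

definition path_object ::
  "('o, 'a, 'm) cat_scheme \<Rightarrow> 'i set \<Rightarrow> ('i \<Rightarrow> 'o) \<Rightarrow> 'o \<Rightarrow> 'o \<Rightarrow> 'a \<Rightarrow> 'a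
     \<Rightarrow> 'o \<Rightarrow> 'a \<Rightarrow> 'a \<Rightarrow> bool" where
  "path_object C I X Z P p1 p2 ZI iZ pZ \<longleftrightarrow>
     is_product C Z Z P p1 p2 \<and> ZI \<in> Ob C \<and>
     iZ \<in> Hom C Z ZI \<and> counting_weq C I X iZ \<and> pZ \<in> Hom C ZI P \<and>
     Comp C p1 (Comp C pZ iZ) = Idt C Z \<and> Comp C p2 (Comp C pZ iZ) = Idt C Z"

definition right_homotopic ::
  "('o, 'a, 'm) cat_scheme \<Rightarrow> 'i set \<Rightarrow> ('i \<Rightarrow> 'o) \<Rightarrow> 'o \<Rightarrow> 'o \<Rightarrow> 'a \<Rightarrow> 'a \<Rightarrow> bool" where
  "right_homotopic C I X Y Z f g \<longleftrightarrow>
     (\<exists>P p1 p2 ZI iZ pZ H. path_object C I X Z P p1 p2 ZI iZ pZ \<and>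
        H \<in> Hom C Y ZI \<and> Comp C p1 (Comp C pZ H) = f \<and> Comp C p2 (Comp C pZ H) = g)"

end

theory Submission
  imports Defs
begin

text \<open>If \<open>H : Y \<rightarrow> Z\<^sup>I\<close> is a right homotopy from \<open>f\<close> to \<open>g\<close>, then, \<open>Y\<close> being cofibrant and
  \<open>i\<^sub>Z\<close> a weak equivalence, \<open>H\<close> lifts along \<open>i\<^sub>Z\<close> to some \<open>l : Y \<rightarrow> Z\<close>. Both projections
  of \<open>p\<^sub>Z \<circ> i\<^sub>Z\<close> are the identity, so \<open>f = p\<^sub>1 \<circ> p\<^sub>Z \<circ> i\<^sub>Z \<circ> l = l\<close> and likewise \<open>g = l\<close>.
  Conversely, \<open>Z\<close> itself with the identity and the diagonal is a path object, along which
  every morphism is right homotopic to itself.\<close>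

lemma comp_in_Hom:
  "category C \<Longrightarrow> f \<in> Hom C A B \<Longrightarrow> g \<in> Hom C B D \<Longrightarrow> Comp C g f \<in> Hom C A D"
  unfolding category_def Hom_def by auto

lemma comp_assoc:
  "category C \<Longrightarrow> f \<in> Hom C A B \<Longrightarrow> g \<in> Hom C B D \<Longrightarrow> h \<in> Hom C D E
   \<Longrightarrow> Comp C h (Comp C g f) = Comp C (Comp C h g) f"
  unfolding category_def Hom_def by auto

lemma comp_Idt_left: "category C \<Longrightarrow> f \<in> Hom C A B \<Longrightarrow> Comp C (Idt C B) f = f"
  unfolding category_def Hom_def by auto

lemma comp_Idt_right: "category C \<Longrightarrow> f \<in> Hom C A B \<Longrightarrow> Comp C f (Idt C A) = f"
  unfolding category_def Hom_def by auto

lemma Idt_in_Hom: "category C \<Longrightarrow> A \<in> Ob C \<Longrightarrow> Idt C A \<in> Hom C A A"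
  unfolding category_def by auto

lemma initial_arrow_unique:
  "is_initial C e \<Longrightarrow> a \<in> Hom C e W \<Longrightarrow> b \<in> Hom C e W \<Longrightarrow> W \<in> Ob C \<Longrightarrow> a = b"
  unfolding is_initial_def by blast

lemma counting_weq_Idt:
  assumes "category C" and "Z \<in> Ob C"
  shows "counting_weq C I X (Idt C Z)"
proof -
  have Idt: "Idt C Z \<in> Hom C Z Z"
    using Idt_in_Hom[OF assms] .
  have "bij_betw (Comp C (Idt C Z)) (Hom C (X i) Z) (Hom C (X i) Z)" for i
  proof -
    have "bij_betw id (Hom C (X i) Z) (Hom C (X i) Z)"
      by simp
    then show ?thesis
      by (rule bij_betw_cong[THEN iffD1, rotated]) (simp add: comp_Idt_left[OF assms(1)])
  qed
  with Idt show ?thesis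
    unfolding counting_weq_def Hom_def by simp
qed

lemma cofibrant_lift_along_weq:
  assumes C: "category C" and e: "is_initial C e" and Y: "cofibrant C I X e Y"
    and w: "counting_weq C I X w" "w \<in> Hom C A B" and v: "v \<in> Hom C Y B"
  shows "\<exists>l \<in> Hom C Y A. Comp C w l = v"
proof -
  define c where "c = (THE a. a \<in> Hom C e Y)"
  have "Y \<in> Ob C"
    using Y unfolding cofibrant_def by simp
  then have c: "c \<in> Hom C e Y"
    using e unfolding c_def is_initial_def by (metis theI')
  have "A \<in> Ob C" "B \<in> Ob C"
    using w(2) C unfolding category_def Hom_def by auto
  then obtain u where u: "u \<in> Hom C e A"
    using e unfolding is_initial_def by blast
  have square: "Comp C w u = Comp C v c"
    using initial_arrow_unique[OF e comp_in_Hom[OF C u w(2)] comp_in_Hom[OF C c v] \<open>B \<in> Ob C\<close>] .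
  have "llp C c w"
    using Y w(1) unfolding cofibrant_def counting_cof_def c_def by blast
  moreover have "Dom C c = e" "Cod C c = Y" "Dom C w = A" "Cod C w = B"
    using c w(2) unfolding Hom_def by auto
  ultimately show ?thesis
    using u v square unfolding llp_def by auto
qed

lemma path_object_identity:
  assumes C: "category C" and prod: "is_product C Z Z P p1 p2"
  shows "\<exists>d. path_object C I X Z P p1 p2 Z (Idt C Z) d"
proof -
  have Z: "Z \<in> Ob C"
    using prod C unfolding is_product_def category_def Hom_def by auto
  have Idt: "Idt C Z \<in> Hom C Z Z"
    using Idt_in_Hom[OF C Z] .
  obtain d where d: "d \<in> Hom C Z P" "Comp C p1 d = Idt C Z" "Comp C p2 d = Idt C Z"
    using prod Z Idt unfolding is_product_def by blast
  then have "path_object C I X Z P p1 p2 Z (Idt C Z) d"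
    unfolding path_object_def
    using prod Z Idt counting_weq_Idt[OF C Z] comp_Idt_right[OF C d(1)] by simp
  then show ?thesis ..
qed

lemma right_homotopic_refl:
  assumes C: "category C" and "has_binary_products C" "Z \<in> Ob C" and f: "f \<in> Hom C Y Z"
  shows "right_homotopic C I X Y Z f f"
proof -
  obtain P p1 p2 where prod: "is_product C Z Z P p1 p2"
    using assms(2,3) unfolding has_binary_products_def by blast
  then obtain d where po: "path_object C I X Z P p1 p2 Z (Idt C Z) d"
    using path_object_identity[OF C] by blast
  have "Comp C p (Comp C d f) = f"
    if "p \<in> Hom C P Z" "Comp C p (Comp C d (Idt C Z)) = Idt C Z" for p
  proof -
    have d: "d \<in> Hom C Z P"
      using po unfolding path_object_def by simp
    then show ?thesis
      using that comp_assoc[OF C f d] comp_Idt_right[OF C d] comp_Idt_left[OF C f] by simp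
  qed
  moreover have "p1 \<in> Hom C P Z" "p2 \<in> Hom C P Z"
    using prod unfolding is_product_def by auto
  ultimately show ?thesis
    using po f unfolding right_homotopic_def path_object_def by blast
qed

lemma right_homotopic_imp_eq:
  assumes C: "category C" and e: "is_initial C e" and Y: "cofibrant C I X e Y"
    and htpy: "right_homotopic C I X Y Z f g"
  shows "f = g"
proof -
  obtain P p1 p2 ZI iZ pZ H where po: "path_object C I X Z P p1 p2 ZI iZ pZ"
    and H: "H \<in> Hom C Y ZI" and f: "Comp C p1 (Comp C pZ H) = f"
    and g: "Comp C p2 (Comp C pZ H) = g"
    using htpy unfolding right_homotopic_def by blast
  have iZ: "iZ \<in> Hom C Z ZI" "counting_weq C I X iZ" and pZ: "pZ \<in> Hom C ZI P"
    and p: "p1 \<in> Hom C P Z" "p2 \<in> Hom C P Z"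
    using po unfolding path_object_def is_product_def by auto
  obtain l where l: "l \<in> Hom C Y Z" and lift: "Comp C iZ l = H"
    using cofibrant_lift_along_weq[OF C e Y iZ(2,1) H] by blast
  have retraction: "Comp C q (Comp C pZ H) = l"
    if q: "q \<in> Hom C P Z" and "Comp C q (Comp C pZ iZ) = Idt C Z" for q
  proof -
    have "Comp C q (Comp C pZ H) = Comp C (Comp C q (Comp C pZ iZ)) l"
      using lift comp_assoc[OF C l iZ(1) pZ] comp_assoc[OF C l comp_in_Hom[OF C iZ(1) pZ] q]
      by simp
    also have "\<dots> = l"
      using that(2) comp_Idt_left[OF C l] by simp
    finally show ?thesis .
  qed
  show "f = g"
    using retraction[OF p(1)] retraction[OF p(2)] po f g unfolding path_object_def by simp
qed

theorem proposition3p4: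
  fixes C :: "('o, 'a) cat" and I :: "'i set" and X :: "'i \<Rightarrow> 'o"
    and e Y Z :: 'o and f g :: 'a
  assumes "category C"
    and "has_small_limits_colimits TYPE(('j, 'k) cat) C"
    and "has_binary_products C"
    and "is_initial C e"
    and "\<forall>i \<in> I. X i \<in> Ob C"
    and "cofibrant C I X e Y"
    and "Z \<in> Ob C"
    and "f \<in> Hom C Y Z" and "g \<in> Hom C Y Z"
  shows "right_homotopic C I X Y Z f g \<longleftrightarrow> f = g"
  using right_homotopic_imp_eq[OF assms(1,4,6)] right_homotopic_refl[OF assms(1,3,7,8)]
  by blast

end
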